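(* Let $X,Y$ be proper geodesically complete Gromov-hyperbolic Busemann spaces that are vertically convergent with respect to boundary points $\infty_X,\infty_Y$, with height functions $h_X,h_Y$ based at these points, and let $X\bowtie Y$ carry an admissible metric $d_\bowtie$ arising from an admissible monotone norm. For any $(x_1,y_1),(x_2,y_2)\in X\bowtie Y$, $$d_\bowtie((x_1,y_1),(x_2,y_2))\le d_X(x_1,x_2)+d_Y(y_1,y_2)+\min\{d_X(x_1,x_2),d_Y(y_1,y_2)\}.$$
   Context: Height function $h=-\beta$, $\beta(x)=\lim_{t\to\infty}[d(\gamma(t),x)-d(\gamma(t),x_0)]$ for a ray $\gamma$ representing the base point. $X\bowtie Y=\{(x,y):h_X(x)=-h_Y(y)\}$. A norm $N$ on $\mathbb{R}^2$ with $N(1,1)=1$ is admissible if $N(a,b)\ge(|a|+|b|)/2$ and monotone if non-decreasing in each coordinate on $[0,\infty)^2$. $d_\bowtie$ is the infimum over continuous paths $(\gamma_X,\gamma_Y):[0,1]\to X\bowtie Y$ of $\sup_{0=t_0<\dots<t_n=1}\sum_i N(d_X(\gamma_X(t_i),\gamma_X(t_{i+1})),d_Y(\gamma_Y(t_i),\gamma_Y(t_{i+1})))$. Busemann space and vertical convergence: as usual (distance between arc-length parametrized geodesics is convex; asymptotic rays to the base point converge after a time shift). *)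

theory Defs
  imports "HOL-Analysis.Analysis"
begin

definition proper_metric :: "'a::metric_space itself \<Rightarrow> bool" where
  "proper_metric _ \<longleftrightarrow> (\<forall>(x::'a) r. compact (cball x r))"

definition isometric_on :: "real set \<Rightarrow> (real \<Rightarrow> 'a::metric_space) \<Rightarrow> bool" where
  "isometric_on I c \<longleftrightarrow> (\<forall>s\<in>I. \<forall>t\<in>I. dist (c s) (c t) = \<bar>s - t\<bar>)"

definition geodesic_space :: "'a::metric_space itself \<Rightarrow> bool" where
  "geodesic_space _ \<longleftrightarrow> (\<forall>(x::'a) y. \<exists>c. c 0 = x \<and> c (dist x y) = y \<and> isometric_on {0..dist x y} c)"

definition geodesically_complete :: "'a::metric_space itself \<Rightarrow> bool" where
  "geodesically_complete _ \<longleftrightarrow>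
     (\<forall>(c::real \<Rightarrow> 'a) a b. a \<le> b \<and> isometric_on {a..b} c \<longrightarrow>
        (\<exists>l. isometric_on UNIV l \<and> (\<forall>t\<in>{a..b}. l t = c t)))"

definition busemann_space :: "'a::metric_space itself \<Rightarrow> bool" where
  "busemann_space T \<longleftrightarrow> geodesic_space T \<and>
     (\<forall>(c::real \<Rightarrow> 'a) c'.
        (\<forall>s\<in>{0..1}. \<forall>t\<in>{0..1}. dist (c s) (c t) = \<bar>s - t\<bar> * dist (c 0) (c 1)) \<and>
        (\<forall>s\<in>{0..1}. \<forall>t\<in>{0..1}. dist (c' s) (c' t) = \<bar>s - t\<bar> * dist (c' 0) (c' 1)) \<longrightarrow>
        (\<forall>t\<in>{0..1}. dist (c t) (c' t) \<le> (1 - t) * dist (c 0) (c' 0) + t * dist (c 1) (c' 1)))"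

definition gromov_product :: "'a::metric_space \<Rightarrow> 'a \<Rightarrow> 'a \<Rightarrow> real" where
  "gromov_product w x y = (dist x w + dist y w - dist x y) / 2"

definition gromov_hyperbolic :: "'a::metric_space itself \<Rightarrow> bool" where
  "gromov_hyperbolic _ \<longleftrightarrow> (\<exists>\<delta>\<ge>0. \<forall>(w::'a) x y z.
      gromov_product w x z \<ge> min (gromov_product w x y) (gromov_product w y z) - \<delta>)"

definition geodesic_ray :: "(real \<Rightarrow> 'a::metric_space) \<Rightarrow> bool" where
  "geodesic_ray g \<longleftrightarrow> isometric_on {0..} g"

definition asymptotic_rays :: "(real \<Rightarrow> 'a::metric_space) \<Rightarrow> (real \<Rightarrow> 'a) \<Rightarrow> bool" where
  "asymptotic_rays g r \<longleftrightarrow> (\<exists>C. \<forall>t\<ge>0. dist (g t) (r t) \<le> C)"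

text \<open>Vertical convergence w.r.t. the boundary point represented by the ray g.\<close>
definition vertically_convergent :: "(real \<Rightarrow> 'a::metric_space) \<Rightarrow> bool" where
  "vertically_convergent g \<longleftrightarrow>
     (\<forall>r. geodesic_ray r \<and> asymptotic_rays r g \<longrightarrow>
        (\<exists>\<tau>. ((\<lambda>t. dist (r t) (g (t + \<tau>))) \<longlongrightarrow> 0) at_top))"

definition busemann_fun :: "(real \<Rightarrow> 'a::metric_space) \<Rightarrow> 'a \<Rightarrow> 'a \<Rightarrow> real" where
  "busemann_fun g x0 x = Lim at_top (\<lambda>t. dist (g t) x - dist (g t) x0)"

definition height :: "(real \<Rightarrow> 'a::metric_space) \<Rightarrow> 'a \<Rightarrow> 'a \<Rightarrow> real" where
  "height g x0 x = - busemann_fun g x0 x"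

definition horo_product ::
  "(real \<Rightarrow> 'a::metric_space) \<Rightarrow> 'a \<Rightarrow> (real \<Rightarrow> 'b::metric_space) \<Rightarrow> 'b \<Rightarrow> ('a \<times> 'b) set" where
  "horo_product gX x0 gY y0 = {(x, y). height gX x0 x = - height gY y0 y}"

definition norm_R2 :: "(real \<Rightarrow> real \<Rightarrow> real) \<Rightarrow> bool" where
  "norm_R2 N \<longleftrightarrow>
     (\<forall>a b. N a b \<ge> 0) \<and> (\<forall>a b. N a b = 0 \<longleftrightarrow> a = 0 \<and> b = 0) \<and>
     (\<forall>l a b. N (l * a) (l * b) = \<bar>l\<bar> * N a b) \<and>
     (\<forall>a b a' b'. N (a + a') (b + b') \<le> N a b + N a' b')"

definition admissible_norm :: "(real \<Rightarrow> real \<Rightarrow> real) \<Rightarrow> bool" where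
  "admissible_norm N \<longleftrightarrow> norm_R2 N \<and> N 1 1 = 1 \<and> (\<forall>a b. N a b \<ge> (\<bar>a\<bar> + \<bar>b\<bar>) / 2)"

definition monotone_norm :: "(real \<Rightarrow> real \<Rightarrow> real) \<Rightarrow> bool" where
  "monotone_norm N \<longleftrightarrow>
     (\<forall>a b a' b'. 0 \<le> a \<and> a \<le> a' \<and> 0 \<le> b \<and> b \<le> b' \<longrightarrow> N a b \<le> N a' b')"

definition N_length :: "(real \<Rightarrow> real \<Rightarrow> real) \<Rightarrow> (real \<Rightarrow> 'a::metric_space \<times> 'b::metric_space) \<Rightarrow> ereal" where
  "N_length N p = (SUP (n, t) \<in> {(n::nat, t::nat \<Rightarrow> real). 0 < n \<and> t 0 = 0 \<and> t n = 1 \<and>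
        (\<forall>i<n. t i < t (Suc i))}.
      ereal (\<Sum>i<n. N (dist (fst (p (t i))) (fst (p (t (Suc i)))))
                       (dist (snd (p (t i))) (snd (p (t (Suc i)))))))"

definition d_bowtie ::
  "(real \<Rightarrow> real \<Rightarrow> real) \<Rightarrow> (real \<Rightarrow> 'a::metric_space) \<Rightarrow> 'a \<Rightarrow> (real \<Rightarrow> 'b::metric_space) \<Rightarrow> 'b
   \<Rightarrow> 'a \<times> 'b \<Rightarrow> 'a \<times> 'b \<Rightarrow> ereal" where
  "d_bowtie N gX x0 gY y0 P Q = (INF p \<in> {p. continuous_on {0..1} p \<and>
        p ` {0..1} \<subseteq> horo_product gX x0 gY y0 \<and> p 0 = P \<and> p 1 = Q}. N_length N p)"

end

theory Submission
  imports Defs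
begin

(* Join (x1, y1) to (x2, y2) by two unit-speed legs inside the horospherical product. First x runs
   along a geodesic from x1 to x2 while y moves along a vertical geodesic line through y1 so as to
   keep the heights opposite; then y runs along a geodesic to y2 while x compensates along a
   vertical line through x2. Vertical lines exist because Busemann functions are 1-Lipschitz and,
   in a Busemann space, convex along geodesic lines: a convex 1-Lipschitz function that descends
   with slope -1 on [0, H] does so on all of (-inf, H]. Properness yields a point at distance H
   where the Busemann function has dropped by exactly H, and geodesic completeness extends a
   geodesic segment from x to that point to a line. The second leg is at most
   |h x2 - h x1| + d(y1, y2), where |h x2 - h x1| <= min (d(x1, x2), d(y1, y2)), and a monotone
   admissible norm satisfies N(r, r) = r, so the N-length of a path is at most the Lipschitz
   constant of its coordinates. *)

section \<open>Busemann functions\<close>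

lemma geodesic_ray_dist_minus_time_tendsto:
  fixes g :: "real \<Rightarrow> 'a::metric_space"
  assumes "geodesic_ray g"
  obtains L where "((\<lambda>t. dist (g t) x - t) \<longlongrightarrow> L) at_top" "\<And>t. t \<ge> 0 \<Longrightarrow> L \<le> dist (g t) x - t"
proof -
  have iso: "dist (g s) (g t) = \<bar>s - t\<bar>" if "s \<ge> 0" "t \<ge> 0" for s t
    using assms that by (auto simp: geodesic_ray_def isometric_on_def)
  define \<psi> where "\<psi> t = dist (g t) x - t" for t
  have antimono: "\<psi> t' \<le> \<psi> t" if "0 \<le> t" "t \<le> t'" for t t'
    using dist_triangle[of "g t'" x "g t"] iso[of t' t] that by (simp add: \<psi>_def)
  have bdd: "- dist (g 0) x \<le> \<psi> t" if "t \<ge> 0" for t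
    using dist_triangle[of "g t" "g 0" x] iso[of t 0] that by (simp add: \<psi>_def dist_commute)
  define L where "L = Inf (\<psi> ` {0..})"
  have "bdd_below (\<psi> ` {0..})"
    using bdd by (auto intro!: bdd_belowI[of _ "- dist (g 0) x"])
  then have lower: "L \<le> \<psi> t" if "t \<ge> 0" for t
    unfolding L_def using that by (auto intro!: cInf_lower)
  have "(\<psi> \<longlongrightarrow> L) at_top"
  proof (rule order_tendstoI)
    fix y assume "y < L"
    then show "eventually (\<lambda>t. y < \<psi> t) at_top"
      using lower by (auto simp: eventually_at_top_linorder intro!: exI[of _ 0] less_le_trans[OF \<open>y < L\<close>])
  next
    fix y assume "L < y"
    then obtain t0 where t0: "t0 \<ge> 0" "\<psi> t0 < y"
      using cInf_lessD[of "\<psi> ` {0..}" y] unfolding L_def by auto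
    then show "eventually (\<lambda>t. \<psi> t < y) at_top"
      using antimono by (auto simp: eventually_at_top_linorder intro!: exI[of _ t0] le_less_trans[OF _ t0(2)])
  qed
  then show thesis
    using that lower unfolding \<psi>_def by blast
qed

lemma busemann_fun_tendsto:
  fixes g :: "real \<Rightarrow> 'a::metric_space"
  assumes "geodesic_ray g"
  shows "((\<lambda>t. dist (g t) x - dist (g t) x0) \<longlongrightarrow> busemann_fun g x0 x) at_top"
proof -
  obtain L1 where L1: "((\<lambda>t. dist (g t) x - t) \<longlongrightarrow> L1) at_top"
    using geodesic_ray_dist_minus_time_tendsto[OF assms] by blast
  obtain L2 where L2: "((\<lambda>t. dist (g t) x0 - t) \<longlongrightarrow> L2) at_top"
    using geodesic_ray_dist_minus_time_tendsto[OF assms] by blast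
  have "((\<lambda>t. (dist (g t) x - t) - (dist (g t) x0 - t)) \<longlongrightarrow> L1 - L2) at_top"
    by (intro tendsto_diff L1 L2)
  then have lim: "((\<lambda>t. dist (g t) x - dist (g t) x0) \<longlongrightarrow> L1 - L2) at_top"
    by simp
  then have "busemann_fun g x0 x = L1 - L2"
    unfolding busemann_fun_def by (intro tendsto_Lim) auto
  with lim show ?thesis by simp
qed

lemma busemann_fun_diff_tendsto:
  fixes g :: "real \<Rightarrow> 'a::metric_space"
  assumes "geodesic_ray g"
  shows "((\<lambda>t. dist (g t) y - dist (g t) z) \<longlongrightarrow> busemann_fun g x0 y - busemann_fun g x0 z) at_top"
  using tendsto_diff[OF busemann_fun_tendsto[OF assms, of y x0] busemann_fun_tendsto[OF assms, of z x0]]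
  by simp

lemma abs_busemann_fun_diff_le:
  fixes g :: "real \<Rightarrow> 'a::metric_space"
  assumes "geodesic_ray g"
  shows "\<bar>busemann_fun g x0 y - busemann_fun g x0 z\<bar> \<le> dist y z"
proof (rule tendsto_upperbound[OF tendsto_rabs[OF busemann_fun_diff_tendsto[OF assms]]])
  show "\<forall>\<^sub>F t in at_top. \<bar>dist (g t) y - dist (g t) z\<bar> \<le> dist y z"
    using abs_dist_diff_le[of y "g t" z for t] by (simp add: dist_commute)
qed simp

lemma continuous_on_busemann_fun:
  fixes g :: "real \<Rightarrow> 'a::metric_space"
  assumes "geodesic_ray g"
  shows "continuous_on S (busemann_fun g x0)"
proof (rule lipschitz_on_continuous_on)
  show "1-lipschitz_on S (busemann_fun g x0)"
    using abs_busemann_fun_diff_le[OF assms] by (intro lipschitz_onI) (simp_all add: dist_real_def)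
qed

lemma abs_height_diff_le:
  fixes g :: "real \<Rightarrow> 'a::metric_space"
  assumes "geodesic_ray g"
  shows "\<bar>height g x0 y - height g x0 z\<bar> \<le> dist y z"
  using abs_busemann_fun_diff_le[OF assms, of x0 z y] by (simp add: height_def dist_commute)

lemma busemann_fun_convex_on_geodesic:
  fixes g :: "real \<Rightarrow> 'a::metric_space"
  assumes "busemann_space TYPE('a)" "geodesic_ray g"
    and "\<forall>s\<in>{0..1}. \<forall>t\<in>{0..1}. dist (c s) (c t) = \<bar>s - t\<bar> * dist (c 0) (c 1)"
    and "t \<in> {0..1}"
  shows "busemann_fun g x0 (c t) \<le> (1 - t) * busemann_fun g x0 (c 0) + t * busemann_fun g x0 (c 1)"
proof -
  have dist_convex: "dist (c t) p \<le> (1 - t) * dist (c 0) p + t * dist (c 1) p" for p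
  proof -
    have "\<forall>s\<in>{0..1}. \<forall>t\<in>{0..1}. dist ((\<lambda>_. p) s) ((\<lambda>_. p) t) = \<bar>s - t\<bar> * dist p p"
      by simp
    from assms(1)[unfolded busemann_space_def, THEN conjunct2, rule_format, OF conjI[OF assms(3) this] assms(4)]
    show ?thesis
      by simp
  qed
  have "((\<lambda>s. (1 - t) * (dist (g s) (c 0) - dist (g s) x0) + t * (dist (g s) (c 1) - dist (g s) x0))
     \<longlongrightarrow> (1 - t) * busemann_fun g x0 (c 0) + t * busemann_fun g x0 (c 1)) at_top"
    by (intro tendsto_intros busemann_fun_tendsto assms(2))
  moreover have "dist (g s) (c t) - dist (g s) x0
      \<le> (1 - t) * (dist (g s) (c 0) - dist (g s) x0) + t * (dist (g s) (c 1) - dist (g s) x0)" for s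
    using dist_convex[of "g s"] by (simp add: dist_commute algebra_simps)
  ultimately show ?thesis
    by (intro tendsto_le[OF trivial_limit_at_top_linorder _ busemann_fun_tendsto[OF assms(2)]]) auto
qed

section \<open>Vertical geodesic lines\<close>

lemma convex_on_busemann_fun_line:
  fixes g :: "real \<Rightarrow> 'a::metric_space"
  assumes "busemann_space TYPE('a)" "geodesic_ray g" "isometric_on UNIV l"
  shows "convex_on UNIV (\<lambda>s. busemann_fun g x0 (l s))"
proof (rule convex_on_linorderI)
  fix t x y :: real
  assume "0 < t" "t < 1" "x < y"
  define c where "c s = l (x + s * (y - x))" for s
  have iso: "dist (l a) (l b) = \<bar>a - b\<bar>" for a b
    using assms(3) by (simp add: isometric_on_def)
  have "\<forall>s\<in>{0..1}. \<forall>s'\<in>{0..1}. dist (c s) (c s') = \<bar>s - s'\<bar> * dist (c 0) (c 1)"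
  proof (intro ballI)
    fix s s' :: real
    have "dist (c s) (c s') = \<bar>(s - s') * (y - x)\<bar>"
      by (simp add: c_def iso algebra_simps)
    also have "\<dots> = \<bar>s - s'\<bar> * (y - x)"
      using \<open>x < y\<close> by (simp add: abs_mult)
    also have "y - x = dist (c 0) (c 1)"
      using \<open>x < y\<close> by (simp add: c_def iso)
    finally show "dist (c s) (c s') = \<bar>s - s'\<bar> * dist (c 0) (c 1)" .
  qed
  from busemann_fun_convex_on_geodesic[OF assms(1,2) this, of t x0]
  have "busemann_fun g x0 (c t) \<le> (1 - t) * busemann_fun g x0 (c 0) + t * busemann_fun g x0 (c 1)"
    using \<open>0 < t\<close> \<open>t < 1\<close> by simp
  moreover have "(1 - t) *\<^sub>R x + t *\<^sub>R y = x + t * (y - x)"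
    by (simp add: algebra_simps)
  ultimately show "busemann_fun g x0 (l ((1 - t) *\<^sub>R x + t *\<^sub>R y))
      \<le> (1 - t) * busemann_fun g x0 (l x) + t * busemann_fun g x0 (l y)"
    by (simp add: c_def)
qed simp

lemma convex_lipschitz_steepest_descent:
  fixes f :: "real \<Rightarrow> real"
  assumes "convex_on UNIV f" "\<And>s t. \<bar>f s - f t\<bar> \<le> \<bar>s - t\<bar>"
    and "0 < H" "f H = f 0 - H" "u \<le> H"
  shows "f u = f 0 - u"
proof -
  have slope_H: "(f 0 - f H) / (0 - H) = -1"
    using assms(3,4) by simp
  consider "u < 0" | "u = 0" | "0 < u \<and> u < H" | "u = H"
    using assms(5) by linarith
  then show ?thesis
  proof cases
    case 1
    have "(f u - f H) / (u - H) \<le> -1"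
      using convex_on_slope_le(2)[OF assms(1), where x=u and t=0 and y=H] 1 assms(3) slope_H by simp
    then have "f 0 - u \<le> f u"
      using 1 assms(3,4) by (simp add: neg_divide_le_eq)
    with assms(2)[of u 0] 1 show ?thesis
      by linarith
  next
    case 3
    have "(f 0 - f u) / (0 - u) \<le> -1"
      using convex_on_slope_le(1)[OF assms(1), where x=0 and t=u and y=H] 3 slope_H by simp
    then have "f u \<le> f 0 - u"
      using 3 by (simp add: neg_divide_le_eq)
    with assms(2)[of u 0] 3 show ?thesis
      by linarith
  qed (use assms(4) in auto)
qed

lemma busemann_fun_almost_drops_on_sphere:
  fixes g :: "real \<Rightarrow> 'a::metric_space"
  assumes "geodesic_space TYPE('a)" "geodesic_ray g" "0 \<le> H" "0 < \<epsilon>"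
  obtains q where "dist x q = H" "busemann_fun g x0 q \<le> busemann_fun g x0 x - H + \<epsilon>"
proof -
  have iso: "dist (g s) (g t) = \<bar>s - t\<bar>" if "s \<ge> 0" "t \<ge> 0" for s t
    using assms(2) that by (auto simp: geodesic_ray_def isometric_on_def)
  obtain L where L: "((\<lambda>t. dist (g t) x - t) \<longlongrightarrow> L) at_top" "\<And>t. t \<ge> 0 \<Longrightarrow> L \<le> dist (g t) x - t"
    using geodesic_ray_dist_minus_time_tendsto[OF assms(2)] by blast
  have "eventually (\<lambda>t. dist (g t) x - t < L + \<epsilon>) at_top"
    using order_tendstoD(2)[OF L(1)] assms(4) by simp
  moreover have "eventually (\<lambda>t. H + dist (g 0) x \<le> t) at_top" "eventually (\<lambda>t. 0 \<le> (t::real)) at_top"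
    by (rule eventually_ge_at_top)+
  ultimately have "eventually (\<lambda>t. dist (g t) x - t < L + \<epsilon> \<and> H + dist (g 0) x \<le> t \<and> 0 \<le> t) at_top"
    by eventually_elim auto
  then obtain s where s: "dist (g s) x - s < L + \<epsilon>" "H + dist (g 0) x \<le> s" "0 \<le> s"
    using eventually_happens by fastforce
  define D where "D = dist x (g s)"
  have "H \<le> D"
    using dist_triangle[of "g s" "g 0" x] iso[of s 0] s by (simp add: D_def dist_commute)
  obtain c where c: "c 0 = x" "c D = g s" "isometric_on {0..D} c"
    using assms(1) unfolding geodesic_space_def D_def by blast
  define q where "q = c H"
  have c_iso: "dist (c a) (c b) = \<bar>a - b\<bar>" if "a \<in> {0..D}" "b \<in> {0..D}" for a b
    using c(3) that by (simp add: isometric_on_def)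
  have dist_xq: "dist x q = H" and dist_qgs: "dist q (g s) = D - H"
    using c_iso[of 0 H] c_iso[of H D] c(1,2) \<open>H \<le> D\<close> assms(3) by (simp_all add: q_def)
  have "dist (g u) q - dist (g u) x \<le> \<epsilon> - H" if "s \<le> u" for u
  proof -
    have "dist (g u) q \<le> (u - s) + (D - H)"
      using dist_triangle[of "g u" q "g s"] iso[of u s] that s(3) dist_qgs by (simp add: dist_commute)
    moreover have "L + u \<le> dist (g u) x"
      using L(2)[of u] that s(3) by linarith
    moreover have "D - s < L + \<epsilon>"
      using s(1) by (simp add: D_def dist_commute)
    ultimately show ?thesis
      by linarith
  qed
  then have "busemann_fun g x0 q - busemann_fun g x0 x \<le> \<epsilon> - H"
    by (intro tendsto_le[OF trivial_limit_at_top_linorder tendsto_const busemann_fun_diff_tendsto[OF assms(2)]])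
      (auto intro: eventually_mono[OF eventually_ge_at_top[of s]])
  with dist_xq show thesis
    by (intro that) auto
qed

lemma exists_busemann_fun_drop:
  fixes g :: "real \<Rightarrow> 'a::metric_space"
  assumes "proper_metric TYPE('a)" "geodesic_space TYPE('a)" "geodesic_ray g" "0 \<le> H"
  obtains q where "dist x q = H" "busemann_fun g x0 q = busemann_fun g x0 x - H"
proof -
  define b where "b = busemann_fun g x0"
  have "closed (sphere x H)"
    unfolding sphere_def by (intro closed_Collect_eq continuous_intros)
  then have "compact (cball x H \<inter> sphere x H)"
    using assms(1) by (intro compact_Int_closed) (simp_all add: proper_metric_def)
  then have "compact (sphere x H)"
    by (simp add: Int_absorb1)
  moreover have "sphere x H \<noteq> {}"
    by (rule busemann_fun_almost_drops_on_sphere[OF assms(2-4), of 1 x x0]) auto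
  ultimately obtain q where q: "q \<in> sphere x H" "\<forall>y\<in>sphere x H. b q \<le> b y"
    using continuous_attains_inf[OF _ _ continuous_on_busemann_fun[OF assms(3)]] unfolding b_def by blast
  have "b q \<le> b x - H + \<epsilon>" if \<epsilon>: "0 < \<epsilon>" for \<epsilon>
  proof -
    obtain q' where "dist x q' = H" "b q' \<le> b x - H + \<epsilon>"
      using busemann_fun_almost_drops_on_sphere[OF assms(2-4) \<epsilon>] unfolding b_def by blast
    with q(2) show ?thesis
      by force
  qed
  then have "b q \<le> b x - H"
    by (rule field_le_epsilon)
  moreover have "b x - H \<le> b q"
    using abs_busemann_fun_diff_le[OF assms(3), of x0 x q] q(1) by (simp add: b_def)
  ultimately show thesis
    using q(1) by (intro that) (auto simp: b_def)
qed

lemma exists_vertical_line: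
  fixes g :: "real \<Rightarrow> 'a::metric_space"
  assumes "proper_metric TYPE('a)" "busemann_space TYPE('a)" "geodesically_complete TYPE('a)"
    and "geodesic_ray g" "0 < H"
  obtains l where "isometric_on UNIV l" "l 0 = x"
    "\<And>u. u \<le> H \<Longrightarrow> busemann_fun g x0 (l u) = busemann_fun g x0 x - u"
proof -
  have geodesic: "geodesic_space TYPE('a)"
    using assms(2) by (simp add: busemann_space_def)
  obtain q where q: "dist x q = H" "busemann_fun g x0 q = busemann_fun g x0 x - H"
    using exists_busemann_fun_drop[OF assms(1) geodesic assms(4) less_imp_le[OF assms(5)]] by blast
  obtain c where c: "c 0 = x" "c H = q" "isometric_on {0..H} c"
    using geodesic[unfolded geodesic_space_def, rule_format, of x q] unfolding q(1) by blast
  obtain l where l: "isometric_on UNIV l" "\<And>t. t \<in> {0..H} \<Longrightarrow> l t = c t"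
    using assms(3)[unfolded geodesically_complete_def, rule_format, of 0 H c] assms(5) c(3) by auto
  have l0: "l 0 = x" and lH: "l H = q"
    using l(2) c(1,2) assms(5) by auto
  have lip: "\<bar>busemann_fun g x0 (l s) - busemann_fun g x0 (l t)\<bar> \<le> \<bar>s - t\<bar>" for s t
    using abs_busemann_fun_diff_le[OF assms(4), of x0 "l s" "l t"] l(1) by (simp add: isometric_on_def)
  show thesis
  proof (rule that[OF l(1) l0])
    fix u assume "u \<le> H"
    from convex_lipschitz_steepest_descent[OF convex_on_busemann_fun_line[OF assms(2,4) l(1)] lip assms(5) _ this]
    show "busemann_fun g x0 (l u) = busemann_fun g x0 x - u"
      using q(2) l0 lH by simp
  qed
qed

section \<open>Paths in the horospherical product\<close>

lemma horo_product_swap: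
  "(x, y) \<in> horo_product gX x0 gY y0 \<longleftrightarrow> (y, x) \<in> horo_product gY y0 gX x0"
  by (auto simp: horo_product_def)

lemma abs_height_diff_le_horo_product:
  assumes "geodesic_ray gX" "geodesic_ray gY"
    and "(x1, y1) \<in> horo_product gX x0 gY y0" "(x2, y2) \<in> horo_product gX x0 gY y0"
  shows "\<bar>height gX x0 x2 - height gX x0 x1\<bar> \<le> min (dist x1 x2) (dist y1 y2)"
  using abs_height_diff_le[OF assms(1), of x0 x2 x1] abs_height_diff_le[OF assms(2), of y0 y1 y2] assms(3,4)
  by (simp add: horo_product_def dist_commute)

lemma horo_product_lift_path:
  fixes gX :: "real \<Rightarrow> 'a::metric_space" and gY :: "real \<Rightarrow> 'b::metric_space"
    and c :: "real \<Rightarrow> 'a" and a :: real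
  assumes "proper_metric TYPE('b)" "busemann_space TYPE('b)" "geodesically_complete TYPE('b)"
    and "geodesic_ray gX" "geodesic_ray gY"
    and "1-lipschitz_on {0..a} c" "0 \<le> a" "(c 0, y) \<in> horo_product gX x0 gY y0"
  obtains Q where "Q 0 = y" "1-lipschitz_on {0..a} Q"
    "\<forall>s\<in>{0..a}. (c s, Q s) \<in> horo_product gX x0 gY y0"
    "dist y (Q a) = \<bar>height gX x0 (c a) - height gX x0 (c 0)\<bar>"
proof -
  define f where "f s = height gX x0 (c s) - height gX x0 (c 0)" for s
  have f_lip: "\<bar>f s - f t\<bar> \<le> \<bar>s - t\<bar>" if "s \<in> {0..a}" "t \<in> {0..a}" for s t
    using abs_height_diff_le[OF assms(4), of x0 "c s" "c t"] lipschitz_onD[OF assms(6) that]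
    by (simp add: f_def dist_real_def)
  have f_bound: "\<bar>f s\<bar> \<le> a" if "s \<in> {0..a}" for s
    using f_lip[OF that, of 0] that assms(7) by (simp add: f_def)
  obtain l where l: "isometric_on UNIV l" "l 0 = y"
    "\<And>u. u \<le> a + 1 \<Longrightarrow> busemann_fun gY y0 (l u) = busemann_fun gY y0 y - u"
    using exists_vertical_line[OF assms(1-3,5), of "a + 1"] assms(7) by auto
  have l_iso: "dist (l s) (l t) = \<bar>s - t\<bar>" for s t
    using l(1) by (simp add: isometric_on_def)
  define Q where "Q s = l (- f s)" for s
  show thesis
  proof (rule that)
    show "Q 0 = y"
      using l(2) by (simp add: Q_def f_def)
    show "1-lipschitz_on {0..a} Q"
      using f_lip by (intro lipschitz_onI) (auto simp: Q_def l_iso dist_real_def abs_minus_commute)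
    show "\<forall>s\<in>{0..a}. (c s, Q s) \<in> horo_product gX x0 gY y0"
    proof
      fix s assume "s \<in> {0..a}"
      then have "busemann_fun gY y0 (Q s) = busemann_fun gY y0 y + f s"
        using l(3)[of "- f s"] f_bound[of s] by (simp add: Q_def)
      with assms(8) show "(c s, Q s) \<in> horo_product gX x0 gY y0"
        by (simp add: horo_product_def height_def f_def)
    qed
    show "dist y (Q a) = \<bar>height gX x0 (c a) - height gX x0 (c 0)\<bar>"
      using l_iso[of 0 "- f a"] l(2) by (simp add: Q_def f_def)
  qed
qed

lemma horo_product_geodesic_leg:
  fixes gX :: "real \<Rightarrow> 'a::metric_space" and gY :: "real \<Rightarrow> 'b::metric_space"
  assumes "geodesic_space TYPE('a)"
    and "proper_metric TYPE('b)" "busemann_space TYPE('b)" "geodesically_complete TYPE('b)"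
    and "geodesic_ray gX" "geodesic_ray gY" "(x1, y1) \<in> horo_product gX x0 gY y0"
  obtains P Q where "P 0 = x1" "Q 0 = y1" "P (dist x1 x2) = x2"
    "1-lipschitz_on {0..dist x1 x2} P" "1-lipschitz_on {0..dist x1 x2} Q"
    "\<forall>t\<in>{0..dist x1 x2}. (P t, Q t) \<in> horo_product gX x0 gY y0"
    "dist y1 (Q (dist x1 x2)) = \<bar>height gX x0 x2 - height gX x0 x1\<bar>"
proof -
  obtain P where P: "P 0 = x1" "P (dist x1 x2) = x2" "isometric_on {0..dist x1 x2} P"
    using assms(1) unfolding geodesic_space_def by blast
  have P_lip: "1-lipschitz_on {0..dist x1 x2} P"
    using P(3) by (auto simp: isometric_on_def lipschitz_on_def dist_real_def)
  obtain Q where "Q 0 = y1" "1-lipschitz_on {0..dist x1 x2} Q"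
    "\<forall>t\<in>{0..dist x1 x2}. (P t, Q t) \<in> horo_product gX x0 gY y0"
    "dist y1 (Q (dist x1 x2)) = \<bar>height gX x0 (P (dist x1 x2)) - height gX x0 (P 0)\<bar>"
    using horo_product_lift_path[OF assms(2-6) P_lip zero_le_dist] P(1) assms(7) by blast
  with P(1,2) P_lip show thesis
    using that by simp
qed

lemma admissible_norm_diagonal:
  assumes "admissible_norm N" "0 \<le> r"
  shows "N r r = r"
proof -
  have "N (r * 1) (r * 1) = \<bar>r\<bar> * N 1 1"
    using assms(1) by (simp only: admissible_norm_def norm_R2_def)
  with assms show ?thesis
    by (simp add: admissible_norm_def)
qed

lemma partition_point_mem:
  fixes t :: "nat \<Rightarrow> real"
  assumes "\<forall>i<n. t i < t (Suc i)" "i \<le> n"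
  shows "t i \<in> {t 0..t n}"
proof -
  have "t 0 \<le> t i"
    using assms(2)
  proof (induction i)
    case (Suc i)
    then show ?case
      using assms(1)[rule_format, of i] by simp
  qed simp
  moreover have "t i \<le> t n"
    using assms(2)
  proof (induction rule: inc_induct)
    case (step k)
    then show ?case
      using assms(1)[rule_format, of k] by simp
  qed simp
  ultimately show ?thesis
    by simp
qed

lemma N_length_le_lipschitz:
  fixes p :: "real \<Rightarrow> 'a::metric_space \<times> 'b::metric_space"
  assumes "admissible_norm N" "monotone_norm N"
    and "L-lipschitz_on {0..1} (fst \<circ> p)" "L-lipschitz_on {0..1} (snd \<circ> p)"
  shows "N_length N p \<le> ereal L"
  unfolding N_length_def
proof (rule SUP_least, clarify)
  fix n and t :: "nat \<Rightarrow> real"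
  assume t: "t 0 = 0" "t n = 1" "\<forall>i<n. t i < t (Suc i)"
  have term_le: "N (dist (fst (p (t i))) (fst (p (t (Suc i))))) (dist (snd (p (t i))) (snd (p (t (Suc i)))))
      \<le> L * (t (Suc i) - t i)" if "i < n" for i
  proof -
    have mem: "t i \<in> {0..1}" "t (Suc i) \<in> {0..1}"
      using partition_point_mem[OF t(3), of i] partition_point_mem[OF t(3), of "Suc i"] that t(1,2) by auto
    have step: "dist (t i) (t (Suc i)) = t (Suc i) - t i"
      using t(3)[rule_format, OF that] by (simp add: dist_real_def)
    have "N (dist (fst (p (t i))) (fst (p (t (Suc i))))) (dist (snd (p (t i))) (snd (p (t (Suc i)))))
       \<le> N (L * (t (Suc i) - t i)) (L * (t (Suc i) - t i))"
      using assms(2) lipschitz_onD[OF assms(3) mem] lipschitz_onD[OF assms(4) mem] step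
      unfolding monotone_norm_def by (simp add: zero_le_dist)
    also have "\<dots> = L * (t (Suc i) - t i)"
      using lipschitz_on_nonneg[OF assms(3)] t(3)[rule_format, OF that]
      by (intro admissible_norm_diagonal[OF assms(1)]) simp
    finally show ?thesis .
  qed
  have "(\<Sum>i<n. N (dist (fst (p (t i))) (fst (p (t (Suc i))))) (dist (snd (p (t i))) (snd (p (t (Suc i))))))
      \<le> (\<Sum>i<n. L * (t (Suc i) - t i))"
    using term_le by (intro sum_mono) simp
  also have "\<dots> = L"
    using t(1,2) by (simp add: sum_distrib_left[symmetric] sum_lessThan_telescope)
  finally show "ereal (\<Sum>i<n. N (dist (fst (p (t i))) (fst (p (t (Suc i)))))
      (dist (snd (p (t i))) (snd (p (t (Suc i)))))) \<le> ereal L"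
    by simp
qed

lemma d_bowtie_le_lipschitz_path:
  fixes P :: "real \<Rightarrow> 'a::metric_space" and Q :: "real \<Rightarrow> 'b::metric_space"
  assumes "admissible_norm N" "monotone_norm N" "0 \<le> L"
    and "1-lipschitz_on {0..L} P" "1-lipschitz_on {0..L} Q"
    and "\<forall>t\<in>{0..L}. (P t, Q t) \<in> horo_product gX x0 gY y0"
  shows "d_bowtie N gX x0 gY y0 (P 0, Q 0) (P L, Q L) \<le> ereal L"
proof -
  define p where "p t = (P (L * t), Q (L * t))" for t
  have scale: "L-lipschitz_on {0..1} (\<lambda>t. L * t)"
    using lipschitz_on_cmult_real_nonneg[OF lipschitz_on_id assms(3)] by simp
  have scale_image: "(\<lambda>t. L * t) ` {0..1} \<subseteq> {0..L}"
    using assms(3) by (auto simp: mult_left_le)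
  have "(1 * L)-lipschitz_on {0..1} (\<lambda>t. P (L * t))" "(1 * L)-lipschitz_on {0..1} (\<lambda>t. Q (L * t))"
    by (rule lipschitz_on_compose2[OF scale lipschitz_on_subset[OF assms(4) scale_image]],
        rule lipschitz_on_compose2[OF scale lipschitz_on_subset[OF assms(5) scale_image]])
  then have lip: "L-lipschitz_on {0..1} (fst \<circ> p)" "L-lipschitz_on {0..1} (snd \<circ> p)"
    by (simp_all add: p_def o_def)
  have "continuous_on {0..1} (\<lambda>t. (fst (p t), snd (p t)))"
    using lip by (intro continuous_on_Pair) (auto dest: lipschitz_on_continuous_on simp: o_def)
  then have "continuous_on {0..1} p"
    by simp
  moreover have "p ` {0..1} \<subseteq> horo_product gX x0 gY y0"
    using assms(6) scale_image by (auto simp: p_def)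
  ultimately have "d_bowtie N gX x0 gY y0 (P 0, Q 0) (P L, Q L) \<le> N_length N p"
    unfolding d_bowtie_def by (intro INF_lower) (simp add: p_def)
  also have "\<dots> \<le> ereal L"
    by (rule N_length_le_lipschitz[OF assms(1,2) lip])
  finally show ?thesis .
qed

lemma lipschitz_on_shift:
  fixes f :: "real \<Rightarrow> 'a::metric_space"
  assumes "C-lipschitz_on {0..b} f"
  shows "C-lipschitz_on {a..a + b} (\<lambda>t. f (t - a))"
proof (rule lipschitz_onI)
  fix s t assume "s \<in> {a..a + b}" "t \<in> {a..a + b}"
  then have "s - a \<in> {0..b}" "t - a \<in> {0..b}"
    by auto
  from lipschitz_onD[OF assms this] show "dist (f (s - a)) (f (t - a)) \<le> C * dist s t"
    by (simp add: dist_real_def)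
qed (rule lipschitz_on_nonneg[OF assms])

lemma d_bowtie_le_two_lipschitz_paths:
  fixes P1 P2 :: "real \<Rightarrow> 'a::metric_space" and Q1 Q2 :: "real \<Rightarrow> 'b::metric_space"
  assumes "admissible_norm N" "monotone_norm N" "0 \<le> a" "0 \<le> b"
    and "1-lipschitz_on {0..a} P1" "1-lipschitz_on {0..a} Q1"
    and "\<forall>t\<in>{0..a}. (P1 t, Q1 t) \<in> horo_product gX x0 gY y0"
    and "1-lipschitz_on {0..b} P2" "1-lipschitz_on {0..b} Q2"
    and "\<forall>t\<in>{0..b}. (P2 t, Q2 t) \<in> horo_product gX x0 gY y0"
    and "P1 a = P2 0" "Q1 a = Q2 0"
  shows "d_bowtie N gX x0 gY y0 (P1 0, Q1 0) (P2 b, Q2 b) \<le> ereal (a + b)"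
proof -
  define P where "P t = (if t \<le> a then P1 t else P2 (t - a))" for t
  define Q where "Q t = (if t \<le> a then Q1 t else Q2 (t - a))" for t
  have "1-lipschitz_on {0..a + b} P" "1-lipschitz_on {0..a + b} Q"
    unfolding P_def Q_def using assms(11,12)
    by (auto intro!: lipschitz_on_concat assms(5,6) lipschitz_on_shift assms(8,9))
  moreover have "\<forall>t\<in>{0..a + b}. (P t, Q t) \<in> horo_product gX x0 gY y0"
    using assms(7,10) by (auto simp: P_def Q_def)
  moreover have "P 0 = P1 0" "Q 0 = Q1 0" "P (a + b) = P2 b" "Q (a + b) = Q2 b"
    using assms(3,4,11,12) by (auto simp: P_def Q_def)
  ultimately show ?thesis
    using d_bowtie_le_lipschitz_path[OF assms(1,2), of "a + b" P Q] assms(3,4) by simp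
qed

theorem mainTheorem6:
  fixes gX :: "real \<Rightarrow> 'a::metric_space" and x0 :: 'a
    and gY :: "real \<Rightarrow> 'b::metric_space" and y0 :: 'b
    and N :: "real \<Rightarrow> real \<Rightarrow> real"
    and x1 x2 :: 'a and y1 y2 :: 'b
  assumes "proper_metric TYPE('a)" "geodesically_complete TYPE('a)"
    "gromov_hyperbolic TYPE('a)" "busemann_space TYPE('a)"
    and "proper_metric TYPE('b)" "geodesically_complete TYPE('b)"
    "gromov_hyperbolic TYPE('b)" "busemann_space TYPE('b)"
    and "geodesic_ray gX" "vertically_convergent gX"
    and "geodesic_ray gY" "vertically_convergent gY"
    and "admissible_norm N" "monotone_norm N"
    and "(x1, y1) \<in> horo_product gX x0 gY y0" "(x2, y2) \<in> horo_product gX x0 gY y0"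
  shows "d_bowtie N gX x0 gY y0 (x1, y1) (x2, y2)
     \<le> ereal (dist x1 x2 + dist y1 y2 + min (dist x1 x2) (dist y1 y2))"
proof -
  define a where "a = dist x1 x2"
  have geodesic_X: "geodesic_space TYPE('a)" and geodesic_Y: "geodesic_space TYPE('b)"
    using assms(4,8) by (simp_all add: busemann_space_def)
  obtain P1 Q1 where leg1: "P1 0 = x1" "Q1 0 = y1" "P1 a = x2"
    "1-lipschitz_on {0..a} P1" "1-lipschitz_on {0..a} Q1"
    "\<forall>t\<in>{0..a}. (P1 t, Q1 t) \<in> horo_product gX x0 gY y0"
    "dist y1 (Q1 a) = \<bar>height gX x0 x2 - height gX x0 x1\<bar>"
    unfolding a_def by (rule horo_product_geodesic_leg[OF geodesic_X assms(5,8,6,9,11,15)])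
  define b where "b = dist (Q1 a) y2"
  have "(x2, Q1 a) \<in> horo_product gX x0 gY y0"
    using leg1(6)[rule_format, of a] leg1(3) by (simp add: a_def)
  then obtain Q2 P2 where leg2: "Q2 0 = Q1 a" "P2 0 = x2" "Q2 b = y2"
    "1-lipschitz_on {0..b} Q2" "1-lipschitz_on {0..b} P2"
    "\<forall>t\<in>{0..b}. (Q2 t, P2 t) \<in> horo_product gY y0 gX x0"
    "dist x2 (P2 b) = \<bar>height gY y0 y2 - height gY y0 (Q1 a)\<bar>"
    unfolding b_def by (rule horo_product_geodesic_leg[OF geodesic_Y assms(1,4,2,11,9) horo_product_swap[THEN iffD1]])
  \<comment> \<open>y2 and Q1 a both have height opposite to that of x2, so the second leg ends at x2\<close>
  have "P2 b = x2"
    using leg2(7) assms(16) \<open>(x2, Q1 a) \<in> horo_product gX x0 gY y0\<close> by (simp add: horo_product_def)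
  have horo2: "\<forall>t\<in>{0..b}. (P2 t, Q2 t) \<in> horo_product gX x0 gY y0"
    using leg2(6) horo_product_swap by blast
  have "d_bowtie N gX x0 gY y0 (P1 0, Q1 0) (P2 b, Q2 b) \<le> ereal (a + b)"
    by (rule d_bowtie_le_two_lipschitz_paths[OF assms(13,14) _ _ leg1(4-6) leg2(5,4) horo2])
      (use leg1(3) leg2(1,2) in \<open>simp_all add: a_def b_def\<close>)
  moreover have "b \<le> dist (Q1 a) y1 + dist y1 y2"
    unfolding b_def by (rule dist_triangle)
  moreover have "dist (Q1 a) y1 \<le> min a (dist y1 y2)"
    using leg1(7) abs_height_diff_le_horo_product[OF assms(9,11,15,16)] by (simp add: a_def dist_commute)
  ultimately show ?thesis
    using leg1(1,2) leg2(3) \<open>P2 b = x2\<close> by (simp add: a_def order_trans)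
qed

end
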